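(* Let $K$ be a field of characteristic zero. Let $NAP$ be the binary quadratic operad generated by one binary operation $\prec$ (with no symmetry) subject to the relation $(x\prec y)\prec z=(x\prec z)\prec y$, and let $Moor$ be the binary quadratic operad generated by one binary operation $\prec$ subject to the relations $(x\prec y)\prec z-(x\prec z)\prec y=0$ and $x\prec(y\prec z)=0$. Then: \begin{enumerate} \item The Koszul dual operad (in the sense of Ginzburg–Kapranov) of $NAP$ is $Moor$. \item For any $K$-vector space $V$, the free $Moor$-algebra over $V$ is the vector space $V\otimes S(V)$ with the bilinear operation determined by $(v\otimes\omega)\prec(v'\otimes 1)=v\otimes(\omega\vee v')$ and $(v\otimes\omega)\prec(v'\otimes\omega')=0$ whenever $\omega'\in S^n(V)$ with $n\geq 1$ (for $v,v'\in V$, $\omega\in S(V)$), together with the embedding $i:V\to V\otimes S(V)$, $i(v)=v\otimes 1$. That is, for every $Moor$-algebra $(A,\prec_A)$ and every linear map $f:V\to A$ there is a unique morphism of $Moor$-algebras $\tilde f:V\otimes S(V)\to A$ with $\tilde f\circ i=f$. \item $\dim Moor(n)=n$ for all $n\geq 1$, i.e. the generating series of $Moor$ is $f_{Moor}(x)=\sum_{n>0}\dim Moor(n)\frac{x^n}{n!}=xe^{x}$. \end{enumerate}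
   Context: $S(V)=K\oplus\bigoplus_{n>0}S^n(V)$ is the symmetric algebra of $V$, where $S^n(V)$ is the quotient of $V^{\otimes n}$ by the action of $\Sigma_n$; its elements are written $v_1\vee\cdots\vee v_n$, and $1\in K=S^0(V)$. A $Moor$-algebra is a $K$-vector space with a bilinear operation $\prec$ satisfying $(x\prec y)\prec z=(x\prec z)\prec y$ and $x\prec(y\prec z)=0$ for all $x,y,z$; a morphism of $Moor$-algebras is a linear map preserving $\prec$. $Moor(n)$ denotes the space of $n$-ary operations of the operad $Moor$. *)

theory Defs
  imports Main "HOL-Library.Poly_Mapping" "HOL-Library.Multiset"
    "HOL-Computational_Algebra.Formal_Power_Series"
begin

definition fscale :: "'k::field \<Rightarrow> ('g \<Rightarrow>\<^sub>0 'k) \<Rightarrow> ('g \<Rightarrow>\<^sub>0 'k)" where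
  "fscale c p = Poly_Mapping.map (\<lambda>x. c * x) p"

definition moor_algebra :: "('k::field \<Rightarrow> 'a::ab_group_add \<Rightarrow> 'a) \<Rightarrow> ('a \<Rightarrow> 'a \<Rightarrow> 'a) \<Rightarrow> bool" where
  "moor_algebra scaleA pr \<longleftrightarrow>
     vector_space scaleA \<and>
     (\<forall>x. Vector_Spaces.linear scaleA scaleA (pr x)) \<and>
     (\<forall>y. Vector_Spaces.linear scaleA scaleA (\<lambda>x. pr x y)) \<and>
     (\<forall>x y z. pr (pr x y) z = pr (pr x z) y) \<and>
     (\<forall>x y z. pr x (pr y z) = 0)"

text \<open>V \<otimes> S(V) = (direct sum over n of) V \<otimes> S^n(V) is presented as the quotient of the free
  vector space on generators (v, M), v \<in> V, M a finite multiset of vectors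
  (the generator (v, {#v1,...,vn#}) stands for v \<otimes> (v1 \<or> ... \<or> vn); the empty multiset is 1),
  by the subspace tsN of multilinearity relations.  The symmetric-group coinvariants defining
  S^n(V) are built in by using multisets.\<close>

definition tsN :: "('k::field \<Rightarrow> 'v::ab_group_add \<Rightarrow> 'v) \<Rightarrow> (('v \<times> 'v multiset) \<Rightarrow>\<^sub>0 'k) set" where
  "tsN scaleV = module.span fscale
     ({Poly_Mapping.single (scaleV a u + scaleV b w, M) 1
        - Poly_Mapping.single (u, M) a - Poly_Mapping.single (w, M) b | a b u w M. True}
      \<union> {Poly_Mapping.single (v, add_mset (scaleV a u + scaleV b w) M) 1
        - Poly_Mapping.single (v, add_mset u M) a - Poly_Mapping.single (v, add_mset w M) b
        | a b u w v M. True})"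

text \<open>Bilinear extension of (v\<otimes>\<omega>) prec (v'\<otimes>1) = v\<otimes>(\<omega>\<or>v'),
  (v\<otimes>\<omega>) prec (v'\<otimes>\<omega>') = 0 for \<omega>' of positive degree, on the free vector space.\<close>
definition tsprec :: "(('v \<times> 'v multiset) \<Rightarrow>\<^sub>0 'k::field) \<Rightarrow> (('v \<times> 'v multiset) \<Rightarrow>\<^sub>0 'k)
     \<Rightarrow> (('v \<times> 'v multiset) \<Rightarrow>\<^sub>0 'k)" where
  "tsprec p q = (\<Sum>x\<in>Poly_Mapping.keys p. \<Sum>y\<in>Poly_Mapping.keys q.
      (if snd y = {#} then Poly_Mapping.single (fst x, add_mset (fst y) (snd x))
                              (Poly_Mapping.lookup p x * Poly_Mapping.lookup q y)
       else 0))"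

definition tsi :: "'v \<Rightarrow> (('v \<times> 'v multiset) \<Rightarrow>\<^sub>0 'k::field)" where
  "tsi v = Poly_Mapping.single (v, {#}) 1"

text \<open>Universal property of the quotient (V\<otimes>S(V), prec) = (free space / tsN, tsprec),
  unpacked: tsN is a two-sided ideal for tsprec, the Moor identities hold modulo tsN
  (so the quotient is a Moor algebra), and Moor-algebra morphisms out of the quotient
  (= linear multiplicative maps on the free space vanishing on tsN) extending a linear f
  exist uniquely.\<close>
definition is_free_moor_tensor_sym :: "('k::field \<Rightarrow> 'v::ab_group_add \<Rightarrow> 'v) \<Rightarrow> bool" where
  "is_free_moor_tensor_sym scaleV \<longleftrightarrow>
     (\<forall>p q. q \<in> tsN scaleV \<longrightarrow> tsprec p q \<in> tsN scaleV \<and> tsprec q p \<in> tsN scaleV) \<and>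
     (\<forall>p q r. tsprec (tsprec p q) r - tsprec (tsprec p r) q \<in> tsN scaleV) \<and>
     (\<forall>p q r. tsprec p (tsprec q r) \<in> tsN scaleV)"

definition moor_morphism_from_ts ::
  "('k::field \<Rightarrow> 'v::ab_group_add \<Rightarrow> 'v) \<Rightarrow> ('k \<Rightarrow> 'a::ab_group_add \<Rightarrow> 'a) \<Rightarrow> ('a \<Rightarrow> 'a \<Rightarrow> 'a)
     \<Rightarrow> ((('v \<times> 'v multiset) \<Rightarrow>\<^sub>0 'k) \<Rightarrow> 'a) \<Rightarrow> bool" where
  "moor_morphism_from_ts scaleV scaleA pr G \<longleftrightarrow>
     Vector_Spaces.linear fscale scaleA G \<and>
     (\<forall>p\<in>tsN scaleV. G p = 0) \<and>
     (\<forall>p q. G (tsprec p q) = pr (G p) (G q))"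

text \<open>Nonassociative monomials: Node a b stands for a prec b; Leaf i is the variable x_i.
  Leaf 0 is reserved as the hole of a context.\<close>
datatype tree = Leaf nat | Node tree tree

fun leaves :: "tree \<Rightarrow> nat list" where
  "leaves (Leaf i) = [i]"
| "leaves (Node a b) = leaves a @ leaves b"

text \<open>Multilinear monomials in x_1,...,x_n: a basis of the free operad F(E)(n).\<close>
definition multilin :: "nat \<Rightarrow> tree set" where
  "multilin n = {t. distinct (leaves t) \<and> set (leaves t) = {1..n}}"

definition freeop :: "nat \<Rightarrow> (tree \<Rightarrow>\<^sub>0 'k::field) set" where
  "freeop n = {p. Poly_Mapping.keys p \<subseteq> multilin n}"

fun subst3 :: "tree \<Rightarrow> tree \<Rightarrow> tree \<Rightarrow> tree \<Rightarrow> tree" where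
  "subst3 (Leaf i) a b c = (if i = 1 then a else if i = 2 then b else if i = 3 then c else Leaf i)"
| "subst3 (Node s t) a b c = Node (subst3 s a b c) (subst3 t a b c)"

fun plug :: "tree \<Rightarrow> tree \<Rightarrow> tree" where
  "plug (Leaf i) t = (if i = 0 then t else Leaf i)"
| "plug (Node l r) t = Node (plug l t) (plug r t)"

definition lin_map :: "(tree \<Rightarrow> tree) \<Rightarrow> (tree \<Rightarrow>\<^sub>0 'k::field) \<Rightarrow> (tree \<Rightarrow>\<^sub>0 'k)" where
  "lin_map h p = (\<Sum>t\<in>Poly_Mapping.keys p. Poly_Mapping.single (h t) (Poly_Mapping.lookup p t))"

text \<open>The operadic ideal (R)(n) generated by a space of relations R \<subseteq> F(E)(3):
  spanned by all C[r(a,b,c)] with C a one-hole context, r \<in> R, a,b,c monomials,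
  the result being multilinear of arity n.\<close>
definition op_ideal :: "(tree \<Rightarrow>\<^sub>0 'k::field) set \<Rightarrow> nat \<Rightarrow> (tree \<Rightarrow>\<^sub>0 'k) set" where
  "op_ideal R n = module.span fscale
     {lin_map (plug C) (lin_map (\<lambda>t. subst3 t a b c) r) | C r a b c.
        r \<in> R \<and> count (mset (leaves C)) 0 = 1 \<and> plug C (Node (Node a b) c) \<in> multilin n}"

definition op_dim :: "(tree \<Rightarrow>\<^sub>0 'k::field) set \<Rightarrow> nat \<Rightarrow> nat" where
  "op_dim R n = vector_space.dim (fscale :: 'k \<Rightarrow> _) (freeop n)
               - vector_space.dim (fscale :: 'k \<Rightarrow> _) (op_ideal R n)"

abbreviation L where "L \<equiv> Leaf"
abbreviation Nd where "Nd \<equiv> Node"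

definition is_perm3 :: "nat \<Rightarrow> nat \<Rightarrow> nat \<Rightarrow> bool" where
  "is_perm3 i j k \<longleftrightarrow> distinct [i, j, k] \<and> set [i, j, k] = {1, 2, 3}"

definition rel_nap :: "nat \<Rightarrow> nat \<Rightarrow> nat \<Rightarrow> (tree \<Rightarrow>\<^sub>0 'k::field)" where
  "rel_nap i j k = Poly_Mapping.single (Nd (Nd (L i) (L j)) (L k)) 1
                 - Poly_Mapping.single (Nd (Nd (L i) (L k)) (L j)) 1"

definition rel_right :: "nat \<Rightarrow> nat \<Rightarrow> nat \<Rightarrow> (tree \<Rightarrow>\<^sub>0 'k::field)" where
  "rel_right i j k = Poly_Mapping.single (Nd (L i) (Nd (L j) (L k))) 1"

definition R_NAP :: "(tree \<Rightarrow>\<^sub>0 'k::field) set" where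
  "R_NAP = module.span fscale {rel_nap i j k | i j k. is_perm3 i j k}"

definition R_Moor :: "(tree \<Rightarrow>\<^sub>0 'k::field) set" where
  "R_Moor = module.span fscale
     ({rel_nap i j k | i j k. is_perm3 i j k} \<union> {rel_right i j k | i j k. is_perm3 i j k})"

text \<open>Ginzburg-Kapranov pairing on F(E)(3) x F(E^v)(3), with E^v identified with E
  (convention of Loday-Vallette): <(x_i x_j) x_k, (x_i x_j) x_k> = sgn(ijk),
  <x_i (x_j x_k), x_i (x_j x_k)> = - sgn(ijk), all other pairings of basis monomials 0.\<close>
definition sgn3 :: "nat \<Rightarrow> nat \<Rightarrow> nat \<Rightarrow> 'k::field" where
  "sgn3 i j k = (if (i, j, k) \<in> {(1, 2, 3), (2, 3, 1), (3, 1, 2)} then 1 else - 1)"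

fun gk_weight :: "tree \<Rightarrow> 'k::field" where
  "gk_weight (Node (Node (Leaf i) (Leaf j)) (Leaf k)) = sgn3 i j k"
| "gk_weight (Node (Leaf i) (Node (Leaf j) (Leaf k))) = - sgn3 i j k"
| "gk_weight _ = 0"

definition gk_pair :: "(tree \<Rightarrow>\<^sub>0 'k::field) \<Rightarrow> (tree \<Rightarrow>\<^sub>0 'k) \<Rightarrow> 'k" where
  "gk_pair p q = (\<Sum>t\<in>multilin 3. gk_weight t * Poly_Mapping.lookup p t * Poly_Mapping.lookup q t)"

text \<open>The relation space R^\<bottom> \<subseteq> F(E^v)(3) of the Koszul dual operad P(E,R)^! = P(E^v, R^\<bottom>).\<close>
definition koszul_dual_rel :: "(tree \<Rightarrow>\<^sub>0 'k::field) set \<Rightarrow> (tree \<Rightarrow>\<^sub>0 'k) set" where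
  "koszul_dual_rel R = {q \<in> freeop 3. \<forall>p\<in>R. gk_pair p q = 0}"

end

theory Submission
  imports Defs
begin

text \<open>
  Koszul duality: under the Ginzburg--Kapranov pairing an element of \<open>F(E)(3)\<close> is orthogonal
  to the NAP relations iff its coefficients on the left combs \<open>(x\<^sub>i x\<^sub>j) x\<^sub>k\<close> are antisymmetric
  in \<open>j, k\<close>; such elements are combinations of the NAP relations and the monomials
  \<open>x\<^sub>i (x\<^sub>j x\<^sub>k)\<close>, i.e.\ of the Moor relations.

  Free algebra: on \<open>V \<otimes> S(V)\<close> the product is right commutative because multisets commute, and a
  right factor of positive degree kills it, so \<open>x \<prec> (y \<prec> z) = 0\<close>.  A linear \<open>f\<close> extends by
  \<open>v \<otimes> (m\<^sub>1 \<or> \<dots> \<or> m\<^sub>k) \<mapsto> (\<dots>(f v \<prec> f m\<^sub>1) \<prec> \<dots>) \<prec> f m\<^sub>k\<close>, and uniquely so since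
  every basis vector is such an iterated product of generators.

  Dimension: modulo the Moor relations every monomial containing a factor \<open>a \<prec> (b \<prec> c)\<close> vanishes
  and the variables of a left comb after its head may be permuted, so \<open>Moor(n)\<close> is spanned by the
  \<open>n\<close> sorted left combs with heads \<open>x\<^sub>1, \<dots>, x\<^sub>n\<close>.  They are independent, because for each
  \<open>i\<close> the sum of the coefficients of all left combs with head \<open>x\<^sub>i\<close> vanishes on the relation
  ideal.
\<close>

section \<open>Linear extensions on free vector spaces\<close>

lemma lookup_fscale [simp]: "Poly_Mapping.lookup (fscale c p) k = c * Poly_Mapping.lookup p k"
  unfolding fscale_def by (simp add: Poly_Mapping.map.rep_eq when_def)

interpretation fs: vector_space "fscale :: 'k::field \<Rightarrow> ('g \<Rightarrow>\<^sub>0 'k) \<Rightarrow> _"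
  by unfold_locales (auto intro!: poly_mapping_eqI simp: lookup_add algebra_simps)

lemma fscale_single [simp]: "fscale c (Poly_Mapping.single k a) = Poly_Mapping.single k (c * a)"
  by (rule poly_mapping_eqI) (simp add: lookup_single when_def)

lemma poly_mapping_sum_single: "(\<Sum>x\<in>Poly_Mapping.keys p. Poly_Mapping.single x (Poly_Mapping.lookup p x)) = p"
  by (rule poly_mapping_eqI)
     (auto simp: lookup_sum lookup_single when_def in_keys_iff sum.delta)

lemma poly_mapping_induct [case_names single add]:
  fixes p :: "'a \<Rightarrow>\<^sub>0 'b::comm_monoid_add"
  assumes "\<And>x a. P (Poly_Mapping.single x a)" and "\<And>p q. P p \<Longrightarrow> P q \<Longrightarrow> P (p + q)"
  shows "P p"
proof -
  have "P (\<Sum>x\<in>A. Poly_Mapping.single x (Poly_Mapping.lookup p x))" if "finite A" for A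
    using that assms by (induction A rule: finite_induct) (metis single_zero sum.empty, simp)
  then show ?thesis by (metis finite_keys poly_mapping_sum_single)
qed

lemma sum_keys_superset:
  assumes "finite S" "Poly_Mapping.keys p \<subseteq> S" "\<And>k. f k 0 = 0"
  shows "(\<Sum>k\<in>Poly_Mapping.keys p. f k (Poly_Mapping.lookup p k)) = (\<Sum>k\<in>S. f k (Poly_Mapping.lookup p k))"
  using assms by (intro sum.mono_neutral_left) (auto simp: in_keys_iff)

lemma sum_keys_single:
  assumes "f x 0 = 0"
  shows "(\<Sum>k\<in>Poly_Mapping.keys (Poly_Mapping.single x a). f k (Poly_Mapping.lookup (Poly_Mapping.single x a) k)) = f x a"
  using assms by (cases "a = 0") simp_all

lemma sum_keys_fscale:
  assumes "\<And>k. f k 0 = 0"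
  shows "(\<Sum>k\<in>Poly_Mapping.keys (fscale c p). f k (Poly_Mapping.lookup (fscale c p) k))
       = (\<Sum>k\<in>Poly_Mapping.keys p. f k (c * Poly_Mapping.lookup p k))"
  using assms by (subst sum_keys_superset[where S = "Poly_Mapping.keys p"]) (auto simp: in_keys_iff)


section \<open>The free Moor-algebra \<open>V \<otimes> S(V)\<close>\<close>

lemma tsprec_add_left: "tsprec (p1 + p2) q = tsprec p1 q + tsprec p2 q"
  unfolding tsprec_def
  by (rule setsum_keys_plus_distrib)
     (auto simp: distrib_right single_add sum.distrib[symmetric] cong: if_cong intro!: sum.cong)

lemma tsprec_add_right: "tsprec p (q1 + q2) = tsprec p q1 + tsprec p q2"
  unfolding tsprec_def sum.distrib[symmetric]
  by (intro sum.cong refl setsum_keys_plus_distrib) (auto simp: distrib_left single_add)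

lemma tsprec_scale_left: "tsprec (fscale c p) q = fscale c (tsprec p q)"
  unfolding tsprec_def
  by (subst sum_keys_fscale) (simp_all add: fs.scale_sum_right mult.assoc if_distrib cong: if_cong)

lemma tsprec_scale_right: "tsprec p (fscale c q) = fscale c (tsprec p q)"
  unfolding tsprec_def
  by (subst sum_keys_fscale) (simp_all add: fs.scale_sum_right mult.left_commute if_distrib cong: if_cong)

lemma tsprec_single:
  "tsprec (Poly_Mapping.single x a) (Poly_Mapping.single y b) =
    (if snd y = {#} then Poly_Mapping.single (fst x, add_mset (fst y) (snd x)) (a * b) else 0)"
  unfolding tsprec_def by (simp add: sum_keys_single)

lemma tsprec_zero_left [simp]: "tsprec 0 q = 0"
  and tsprec_zero_right [simp]: "tsprec p 0 = 0"
  by (simp_all add: tsprec_def)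

lemma tsprec_diff_left: "tsprec (p1 - p2) q = tsprec p1 q - tsprec p2 q"
  by (metis add_diff_cancel diff_add_cancel tsprec_add_left)

lemma tsprec_diff_right: "tsprec p (q1 - q2) = tsprec p q1 - tsprec p q2"
  by (metis add_diff_cancel diff_add_cancel tsprec_add_right)

lemma tsprec_right_commute: "tsprec (tsprec p q) r = tsprec (tsprec p r) q"
proof (induction p rule: poly_mapping_induct)
  case (single x a)
  show ?case
  proof (induction q rule: poly_mapping_induct)
    case (single y b)
    show ?case
      by (induction r rule: poly_mapping_induct)
         (simp_all add: tsprec_single add_mset_commute mult_ac tsprec_add_left tsprec_add_right)
  qed (simp add: tsprec_add_left tsprec_add_right)
qed (simp add: tsprec_add_left tsprec_add_right)

lemma keys_tsprec: "Poly_Mapping.keys (tsprec p q) \<subseteq> {y. snd y \<noteq> {#}}"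
  unfolding tsprec_def
  by (rule order.trans[OF keys_sum]) (auto dest!: set_mp[OF keys_sum] split: if_splits)

lemma tsprec_tsprec_right: "tsprec p (tsprec q r) = 0"
  using keys_tsprec[of q r] unfolding tsprec_def by (auto intro!: sum.neutral)

definition tsgens :: "('k::field \<Rightarrow> 'v::ab_group_add \<Rightarrow> 'v) \<Rightarrow> (('v \<times> 'v multiset) \<Rightarrow>\<^sub>0 'k) set" where
 "tsgens scaleV = {Poly_Mapping.single (scaleV a u + scaleV b w, M) 1
        - Poly_Mapping.single (u, M) a - Poly_Mapping.single (w, M) b | a b u w M. True}
      \<union> {Poly_Mapping.single (v, add_mset (scaleV a u + scaleV b w) M) 1
        - Poly_Mapping.single (v, add_mset u M) a - Poly_Mapping.single (v, add_mset w M) b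
        | a b u w v M. True}"

lemma tsN_eq_span_tsgens: "tsN scaleV = fs.span (tsgens scaleV)"
  unfolding tsN_def tsgens_def ..

lemma tsgens_multilinear_vector:
  "Poly_Mapping.single (scaleV a u + scaleV b w, M) 1
     - Poly_Mapping.single (u, M) a - Poly_Mapping.single (w, M) b \<in> tsgens scaleV"
  unfolding tsgens_def by blast

lemma tsgens_multilinear_mset:
  "Poly_Mapping.single (v, add_mset (scaleV a u + scaleV b w) M) 1
     - Poly_Mapping.single (v, add_mset u M) a - Poly_Mapping.single (v, add_mset w M) b
   \<in> tsgens scaleV"
  unfolding tsgens_def by blast

lemma fscale_tsgens_in_tsN: "g \<in> tsgens scaleV \<Longrightarrow> fscale c g \<in> tsN scaleV"
  unfolding tsN_eq_span_tsgens by (intro fs.span_scale fs.span_base)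

lemma tsprec_single_tsgens:
  assumes "g \<in> tsgens scaleV"
  shows "tsprec (Poly_Mapping.single x c) g \<in> tsN scaleV"
  using assms unfolding tsgens_def
proof (elim UnE CollectE exE conjE)
  fix a b u w M
  assume g: "g = Poly_Mapping.single (scaleV a u + scaleV b w, M) 1
        - Poly_Mapping.single (u, M) a - Poly_Mapping.single (w, M) b"
  show ?thesis
  proof (cases "M = {#}")
    case True
    have "tsprec (Poly_Mapping.single x c) g = fscale c
       (Poly_Mapping.single (fst x, add_mset (scaleV a u + scaleV b w) (snd x)) 1
        - Poly_Mapping.single (fst x, add_mset u (snd x)) a
        - Poly_Mapping.single (fst x, add_mset w (snd x)) b)"
      using True by (simp add: g tsprec_diff_right tsprec_single fs.scale_right_diff_distrib)
    then show ?thesis by (simp add: fscale_tsgens_in_tsN tsgens_multilinear_mset)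
  qed (simp add: g tsprec_diff_right tsprec_single tsN_eq_span_tsgens fs.span_zero)
qed (simp add: tsprec_diff_right tsprec_single tsN_eq_span_tsgens fs.span_zero)

lemma tsprec_tsgens_single:
  assumes "g \<in> tsgens scaleV"
  shows "tsprec g (Poly_Mapping.single x c) \<in> tsN scaleV"
proof (cases "snd x = {#}")
  case True
  from assms show ?thesis unfolding tsgens_def
  proof (elim UnE CollectE exE conjE)
    fix a b u w M
    assume "g = Poly_Mapping.single (scaleV a u + scaleV b w, M) 1
        - Poly_Mapping.single (u, M) a - Poly_Mapping.single (w, M) b"
    then have "tsprec g (Poly_Mapping.single x c) = fscale c
       (Poly_Mapping.single (scaleV a u + scaleV b w, add_mset (fst x) M) 1
        - Poly_Mapping.single (u, add_mset (fst x) M) a - Poly_Mapping.single (w, add_mset (fst x) M) b)"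
      using True by (simp add: tsprec_diff_left tsprec_single fs.scale_right_diff_distrib mult.commute)
    then show ?thesis by (simp add: fscale_tsgens_in_tsN tsgens_multilinear_vector)
  next
    fix a b u w v M
    assume "g = Poly_Mapping.single (v, add_mset (scaleV a u + scaleV b w) M) 1
        - Poly_Mapping.single (v, add_mset u M) a - Poly_Mapping.single (v, add_mset w M) b"
    then have "tsprec g (Poly_Mapping.single x c) = fscale c
       (Poly_Mapping.single (v, add_mset (scaleV a u + scaleV b w) (add_mset (fst x) M)) 1
        - Poly_Mapping.single (v, add_mset u (add_mset (fst x) M)) a
        - Poly_Mapping.single (v, add_mset w (add_mset (fst x) M)) b)"
      using True
      by (simp add: tsprec_diff_left tsprec_single fs.scale_right_diff_distrib mult.commute add_mset_commute)
    then show ?thesis by (simp add: fscale_tsgens_in_tsN tsgens_multilinear_mset)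
  qed
next
  case False
  then have "tsprec g (Poly_Mapping.single x c) = 0"
    unfolding tsprec_def by (auto intro!: sum.neutral)
  then show ?thesis by (simp add: tsN_eq_span_tsgens fs.span_zero)
qed

lemma tsN_tsprec_ideal:
  assumes "q \<in> tsN scaleV"
  shows "tsprec p q \<in> tsN scaleV \<and> tsprec q p \<in> tsN scaleV"
proof -
  have closed: "fs.subspace (tsN scaleV)"
    unfolding tsN_eq_span_tsgens by (rule fs.subspace_span)
  have gens: "tsprec p g \<in> tsN scaleV \<and> tsprec g p \<in> tsN scaleV" if "g \<in> tsgens scaleV" for g
    by (induction p rule: poly_mapping_induct)
       (use that tsprec_single_tsgens tsprec_tsgens_single closed in
        \<open>auto simp: tsprec_add_left tsprec_add_right fs.subspace_add\<close>)
  from assms[unfolded tsN_eq_span_tsgens] show ?thesis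
  proof (induction q rule: fs.span_induct_alt)
    case base
    then show ?case using closed by (simp add: fs.subspace_0)
  next
    case (step c g q)
    then show ?case
      using gens[OF step(1)] closed
      by (simp add: tsprec_add_left tsprec_add_right tsprec_scale_left tsprec_scale_right
          fs.subspace_add fs.subspace_scale)
  qed
qed

lemma is_free_moor_tensor_sym: "is_free_moor_tensor_sym scaleV"
proof -
  have "0 \<in> tsN scaleV" by (simp add: tsN_eq_span_tsgens fs.span_zero)
  then show ?thesis
    unfolding is_free_moor_tensor_sym_def
    by (simp add: tsN_tsprec_ideal tsprec_right_commute tsprec_tsprec_right)
qed

locale moor_extension =
  fixes scaleV :: "'k::field \<Rightarrow> 'v::ab_group_add \<Rightarrow> 'v"
    and scaleA :: "'k \<Rightarrow> 'a::ab_group_add \<Rightarrow> 'a"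
    and pr :: "'a \<Rightarrow> 'a \<Rightarrow> 'a"
    and f :: "'v \<Rightarrow> 'a"
  assumes moor: "moor_algebra scaleA pr"
    and linear_f: "Vector_Spaces.linear scaleV scaleA f"
begin

interpretation A: vector_space scaleA
  using moor unfolding moor_algebra_def by blast

lemma pr_add_right: "pr x (y + z) = pr x y + pr x z"
  and pr_scale_right: "pr x (scaleA c y) = scaleA c (pr x y)"
  and pr_add_left: "pr (y + z) x = pr y x + pr z x"
  and pr_scale_left: "pr (scaleA c y) x = scaleA c (pr y x)"
  and pr_right_commute: "pr (pr x y) z = pr (pr x z) y"
  and pr_pr_right: "pr x (pr y z) = 0"
  using moor unfolding moor_algebra_def Vector_Spaces.linear_iff by blast+

lemma f_add: "f (x + y) = f x + f y"
  and f_scale: "f (scaleV c x) = scaleA c (f x)"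
  using linear_f unfolding Vector_Spaces.linear_iff by blast+

interpretation comp_fun_commute "\<lambda>m a. pr a (f m)"
  by unfold_locales (auto simp: fun_eq_iff pr_right_commute)

definition moor_word :: "'v \<times> 'v multiset \<Rightarrow> 'a" where
  "moor_word x = fold_mset (\<lambda>m a. pr a (f m)) (f (fst x)) (snd x)"

lemma moor_word_empty [simp]: "moor_word (v, {#}) = f v"
  and moor_word_add_mset [simp]: "moor_word (v, add_mset m M) = pr (moor_word (v, M)) (f m)"
  by (simp_all add: moor_word_def)

lemma moor_word_linear_vector:
  "moor_word (scaleV a u + scaleV b w, M) = scaleA a (moor_word (u, M)) + scaleA b (moor_word (w, M))"
  by (induction M) (simp_all add: f_add f_scale pr_add_left pr_scale_left)

definition moor_ext :: "(('v \<times> 'v multiset) \<Rightarrow>\<^sub>0 'k) \<Rightarrow> 'a" where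
  "moor_ext p = (\<Sum>x\<in>Poly_Mapping.keys p. scaleA (Poly_Mapping.lookup p x) (moor_word x))"

lemma moor_ext_add: "moor_ext (p + q) = moor_ext p + moor_ext q"
  unfolding moor_ext_def by (rule setsum_keys_plus_distrib) (simp_all add: A.scale_left_distrib)

lemma moor_ext_scale: "moor_ext (fscale c p) = scaleA c (moor_ext p)"
  unfolding moor_ext_def by (subst sum_keys_fscale) (simp_all add: A.scale_sum_right)

lemma moor_ext_zero [simp]: "moor_ext 0 = 0"
  by (simp add: moor_ext_def)

lemma moor_ext_single: "moor_ext (Poly_Mapping.single x c) = scaleA c (moor_word x)"
  unfolding moor_ext_def by (simp add: sum_keys_single)

lemma moor_ext_diff: "moor_ext (p - q) = moor_ext p - moor_ext q"
  by (metis moor_ext_add add_diff_cancel diff_add_cancel)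

lemma moor_ext_tsN: "p \<in> tsN scaleV \<Longrightarrow> moor_ext p = 0"
  unfolding tsN_eq_span_tsgens
proof (induction p rule: fs.span_induct_alt)
  case base
  then show ?case by simp
next
  case (step c g p)
  have "moor_ext g = 0" using step(1) unfolding tsgens_def
    by (auto simp: moor_ext_diff moor_ext_single moor_word_linear_vector f_add f_scale
        pr_add_right pr_scale_right)
  then show ?case using step by (simp add: moor_ext_add moor_ext_scale)
qed

lemma moor_ext_tsprec: "moor_ext (tsprec p q) = pr (moor_ext p) (moor_ext q)"
proof (induction p rule: poly_mapping_induct)
  case (single x a)
  show ?case
  proof (induction q rule: poly_mapping_induct)
    case (single y b)
    obtain v M where y: "y = (v, M)" by (cases y)
    then show ?case
      by (cases M; cases x)
         (simp_all add: tsprec_single moor_ext_single pr_scale_left pr_scale_right pr_pr_right)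
  qed (simp add: tsprec_add_right moor_ext_add pr_add_right)
qed (simp add: tsprec_add_left moor_ext_add pr_add_left)

lemma moor_ext_morphism: "moor_morphism_from_ts scaleV scaleA pr moor_ext"
  unfolding moor_morphism_from_ts_def Vector_Spaces.linear_iff
  using fs.vector_space_axioms A.vector_space_axioms
  by (simp add: moor_ext_add moor_ext_scale moor_ext_tsN moor_ext_tsprec)

lemma moor_ext_tsi: "moor_ext (tsi v) = f v"
  by (simp add: tsi_def moor_ext_single)

lemma moor_morphism_unique:
  assumes G: "moor_morphism_from_ts scaleV scaleA pr G" and Gf: "\<forall>v. G (tsi v) = f v"
  shows "G = moor_ext"
proof
  have G_add: "G (p + q) = G p + G q" and G_scale: "G (fscale c p) = scaleA c (G p)"
    and G_tsprec: "G (tsprec p q) = pr (G p) (G q)" for p q c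
    using G unfolding moor_morphism_from_ts_def Vector_Spaces.linear_iff by blast+
  have G_basis: "G (Poly_Mapping.single (v, M) 1) = moor_word (v, M)" for v M
  proof (induction M)
    case empty
    then show ?case using Gf by (simp add: tsi_def)
  next
    case (add m M)
    have "Poly_Mapping.single (v, add_mset m M) (1::'k) = tsprec (Poly_Mapping.single (v, M) 1) (tsi m)"
      by (simp add: tsi_def tsprec_single)
    then show ?case using add Gf G_tsprec by simp
  qed
  fix p
  show "G p = moor_ext p"
  proof (induction p rule: poly_mapping_induct)
    case (single x a)
    have "G (Poly_Mapping.single x a) = scaleA a (G (Poly_Mapping.single x 1))"
      using G_scale[of a "Poly_Mapping.single x 1"] by simp
    then show ?case using G_basis[of "fst x" "snd x"] by (simp add: moor_ext_single)
  qed (simp add: G_add moor_ext_add)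
qed

end

lemma free_moor_universal:
  assumes "moor_algebra scaleA pr" and "Vector_Spaces.linear scaleV scaleA f"
  shows "\<exists>!G. moor_morphism_from_ts scaleV scaleA pr G \<and> (\<forall>v. G (tsi v) = f v)"
proof -
  interpret moor_extension scaleV scaleA pr f
    using assms by (rule moor_extension.intro)
  show ?thesis
    using moor_ext_morphism moor_ext_tsi moor_morphism_unique by blast
qed

section \<open>The Koszul dual of NAP\<close>

abbreviation left3 :: "nat \<Rightarrow> nat \<Rightarrow> nat \<Rightarrow> tree" where
  "left3 i j k \<equiv> Nd (Nd (L i) (L j)) (L k)"

abbreviation right3 :: "nat \<Rightarrow> nat \<Rightarrow> nat \<Rightarrow> tree" where
  "right3 i j k \<equiv> Nd (L i) (Nd (L j) (L k))"

lemma is_perm3_iff: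
  "is_perm3 i j k \<longleftrightarrow> (i,j,k) \<in> {(1,2,3),(1,3,2),(2,1,3),(2,3,1),(3,1,2),(3,2,1)}"
proof
  assume "is_perm3 i j k"
  then have "i \<in> {1,2,3}" "j \<in> {1,2,3}" "k \<in> {1,2,3}" "i \<noteq> j" "i \<noteq> k" "j \<noteq> k"
    unfolding is_perm3_def by (auto simp: insert_eq_iff)
  then show "(i,j,k) \<in> {(1,2,3),(1,3,2),(2,1,3),(2,3,1),(3,1,2),(3,2,1)}" by auto
qed (auto simp: is_perm3_def)

lemma is_perm3_swap: "is_perm3 i j k \<Longrightarrow> is_perm3 i k j"
  unfolding is_perm3_def by auto

lemma leaves_not_Nil: "leaves t \<noteq> []"
  by (induction t) auto

lemma length_leaves_pos: "length (leaves t) > 0"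
  using leaves_not_Nil by auto

lemma length_leaves_eq_1: "length (leaves t) = 1 \<Longrightarrow> \<exists>a. t = L a"
proof (cases t)
  case (Node l r)
  assume "length (leaves t) = 1"
  then show ?thesis using Node length_leaves_pos[of l] length_leaves_pos[of r] by simp
qed simp

lemma length_leaves_eq_2: "length (leaves t) = 2 \<Longrightarrow> \<exists>a b. t = Nd (L a) (L b)"
proof (cases t)
  case (Node l r)
  assume "length (leaves t) = 2"
  then have "length (leaves l) + length (leaves r) = 2" using Node by simp
  then have "length (leaves l) = 1" "length (leaves r) = 1"
    using length_leaves_pos[of l] length_leaves_pos[of r] by linarith+
  then show ?thesis using Node length_leaves_eq_1 by blast
qed simp

lemma length_leaves_eq_3: "length (leaves t) = 3 \<Longrightarrow> \<exists>a b c. t = left3 a b c \<or> t = right3 a b c"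
proof (cases t)
  case (Node l r)
  assume "length (leaves t) = 3"
  then have "length (leaves l) + length (leaves r) = 3" using Node by simp
  then have "length (leaves l) = 1 \<and> length (leaves r) = 2 \<or> length (leaves l) = 2 \<and> length (leaves r) = 1"
    using length_leaves_pos[of l] length_leaves_pos[of r] by linarith
  then show ?thesis using Node length_leaves_eq_1 length_leaves_eq_2 by blast
qed simp

lemma multilin_3_iff:
  "t \<in> multilin 3 \<longleftrightarrow> (\<exists>i j k. is_perm3 i j k \<and> (t = left3 i j k \<or> t = right3 i j k))"
proof
  assume "t \<in> multilin 3"
  then have d: "distinct (leaves t)" and s: "set (leaves t) = {1..3}" unfolding multilin_def by auto
  then have "length (leaves t) = 3" using distinct_card[OF d] by simp
  then obtain a b c where t: "t = left3 a b c \<or> t = right3 a b c" using length_leaves_eq_3 by blast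
  have e: "{1..3::nat} = {1,2,3}" by auto
  have l: "leaves t = [a,b,c]" using t by auto
  have "is_perm3 a b c" using d s unfolding is_perm3_def l e by simp
  with t show "\<exists>i j k. is_perm3 i j k \<and> (t = left3 i j k \<or> t = right3 i j k)" by blast
qed (auto simp: multilin_def is_perm3_def)

lemma multilin_3_explicit: "multilin 3 =
  {left3 1 2 3, left3 1 3 2, left3 2 1 3, left3 2 3 1, left3 3 1 2, left3 3 2 1,
   right3 1 2 3, right3 1 3 2, right3 2 1 3, right3 2 3 1, right3 3 1 2, right3 3 2 1}"
  by (rule set_eqI, unfold multilin_3_iff is_perm3_iff) auto

lemma subspace_freeop: "fs.subspace (freeop n)"
  unfolding fs.subspace_def freeop_def
proof (intro conjI ballI allI)
  fix x y :: "tree \<Rightarrow>\<^sub>0 'k::field"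
  assume "x \<in> {p. Poly_Mapping.keys p \<subseteq> multilin n}" "y \<in> {p. Poly_Mapping.keys p \<subseteq> multilin n}"
  then show "x + y \<in> {p. Poly_Mapping.keys p \<subseteq> multilin n}" using keys_add[of x y] by auto
qed (auto simp: in_keys_iff)

lemma R_Moor_subset_freeop: "R_Moor \<subseteq> freeop 3"
  unfolding R_Moor_def
proof (rule fs.span_minimal[OF _ subspace_freeop], rule subsetI)
  fix x :: "tree \<Rightarrow>\<^sub>0 'k::field"
  assume "x \<in> {rel_nap i j k |i j k. is_perm3 i j k} \<union> {rel_right i j k |i j k. is_perm3 i j k}"
  then obtain i j k where p: "is_perm3 i j k" and x: "x = rel_nap i j k \<or> x = rel_right i j k"
    by blast
  have "Poly_Mapping.keys x \<subseteq> {left3 i j k, left3 i k j, right3 i j k}"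
    using x keys_diff[of "Poly_Mapping.single (left3 i j k) (1::'k)" "Poly_Mapping.single (left3 i k j) 1"]
    unfolding rel_nap_def rel_right_def by auto
  also have "\<dots> \<subseteq> multilin 3"
    using p is_perm3_swap[OF p] by (auto simp: multilin_3_iff)
  finally show "x \<in> freeop 3" unfolding freeop_def by simp
qed

lemma gk_pair_add_left: "gk_pair (p1 + p2) q = gk_pair p1 q + gk_pair p2 q"
  unfolding gk_pair_def by (simp add: lookup_add algebra_simps sum.distrib)

lemma gk_pair_scale_left: "gk_pair (fscale c p) q = c * gk_pair p q"
  unfolding gk_pair_def by (simp add: sum_distrib_left mult_ac)

lemma gk_pair_diff_left: "gk_pair (p1 - p2) q = gk_pair p1 q - gk_pair p2 q"
  by (metis add_diff_cancel diff_add_cancel gk_pair_add_left)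

lemma gk_pair_single:
  "t \<in> multilin 3 \<Longrightarrow> gk_pair (Poly_Mapping.single t c) q = gk_weight t * c * Poly_Mapping.lookup q t"
  unfolding gk_pair_def
  by (simp add: multilin_3_explicit lookup_single when_def if_distrib if_distribR sum.delta cong: if_cong)

lemma sgn3_swap: "is_perm3 i j k \<Longrightarrow> sgn3 i k j = - (sgn3 i j k :: 'k::field)"
  unfolding is_perm3_iff sgn3_def by auto

lemma sgn3_nonzero: "(sgn3 i j k :: 'k::field) \<noteq> 0"
  unfolding sgn3_def by auto

lemma gk_pair_rel_nap:
  assumes "is_perm3 i j k"
  shows "gk_pair (rel_nap i j k) q =
     (sgn3 i j k :: 'k::field) * (Poly_Mapping.lookup q (left3 i j k) + Poly_Mapping.lookup q (left3 i k j))"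
proof -
  have "left3 i j k \<in> multilin 3" "left3 i k j \<in> multilin 3"
    using assms is_perm3_swap[OF assms] unfolding multilin_3_iff by blast+
  then show ?thesis
    unfolding rel_nap_def gk_pair_diff_left
    by (simp add: gk_pair_single sgn3_swap[OF assms] algebra_simps)
qed

definition left3_antisymmetric :: "(tree \<Rightarrow>\<^sub>0 'k::field) \<Rightarrow> bool" where
  "left3_antisymmetric q \<longleftrightarrow> (\<forall>i j k. is_perm3 i j k \<longrightarrow>
      Poly_Mapping.lookup q (left3 i j k) + Poly_Mapping.lookup q (left3 i k j) = 0)"

lemma orthogonal_R_NAP_iff:
  "(\<forall>p\<in>R_NAP. gk_pair p q = 0) \<longleftrightarrow> left3_antisymmetric (q :: tree \<Rightarrow>\<^sub>0 'k::field)"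
proof
  assume orth: "\<forall>p\<in>R_NAP. gk_pair p q = 0"
  show "left3_antisymmetric q" unfolding left3_antisymmetric_def
  proof (intro allI impI)
    fix i j k assume p: "is_perm3 i j k"
    have "rel_nap i j k \<in> (R_NAP :: (tree \<Rightarrow>\<^sub>0 'k) set)"
      unfolding R_NAP_def using p by (intro fs.span_base) blast
    then have "gk_pair (rel_nap i j k) q = 0" using orth by blast
    moreover have "(sgn3 i j k :: 'k) \<noteq> 0" by (rule sgn3_nonzero)
    ultimately show "Poly_Mapping.lookup q (left3 i j k) + Poly_Mapping.lookup q (left3 i k j) = 0"
      by (simp add: gk_pair_rel_nap[OF p])
  qed
next
  assume anti: "left3_antisymmetric q"
  show "\<forall>p\<in>R_NAP. gk_pair p q = 0" unfolding R_NAP_def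
  proof
    fix p :: "tree \<Rightarrow>\<^sub>0 'k"
    assume "p \<in> fs.span {rel_nap i j k |i j k. is_perm3 i j k}"
    then show "gk_pair p q = 0"
    proof (induction p rule: fs.span_induct_alt)
      case (step c g p)
      then obtain i j k where "is_perm3 i j k" and "g = rel_nap i j k" by blast
      then have "gk_pair g q = 0" using anti by (simp add: gk_pair_rel_nap left3_antisymmetric_def)
      then show ?case using step by (simp add: gk_pair_add_left gk_pair_scale_left)
    qed (simp add: gk_pair_def)
  qed
qed

lemma R_Moor_left3_antisymmetric: "q \<in> R_Moor \<Longrightarrow> left3_antisymmetric q"
  unfolding R_Moor_def
proof (induction q rule: fs.span_induct_alt)
  case (step c g q)
  from step(1) obtain i j k where "g = rel_nap i j k \<or> g = rel_right i j k" by blast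
  then have "left3_antisymmetric g"
  proof
    assume g: "g = rel_nap i j k"
    show ?thesis unfolding left3_antisymmetric_def
    proof (intro allI impI)
      fix a b e
      show "Poly_Mapping.lookup g (left3 a b e) + Poly_Mapping.lookup g (left3 a e b) = 0"
        unfolding g rel_nap_def lookup_minus lookup_single when_def
        by (cases "i = a"; cases "j = b"; cases "k = e"; cases "j = e"; cases "k = b") simp_all
    qed
  qed (simp add: left3_antisymmetric_def rel_right_def lookup_single)
  then show ?case using step(2) unfolding left3_antisymmetric_def
    by (simp add: lookup_add algebra_simps flip: distrib_left)
qed (simp add: left3_antisymmetric_def)

lemma R_Moor_fscale_rel_nap: "is_perm3 i j k \<Longrightarrow> fscale c (rel_nap i j k) \<in> R_Moor"
  and R_Moor_fscale_rel_right: "is_perm3 i j k \<Longrightarrow> fscale c (rel_right i j k) \<in> R_Moor"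
  unfolding R_Moor_def by (intro fs.span_scale fs.span_base; blast)+

lemma R_Moor_add: "x \<in> R_Moor \<Longrightarrow> y \<in> R_Moor \<Longrightarrow> x + y \<in> R_Moor"
  unfolding R_Moor_def by (rule fs.span_add)

lemma left3_antisymmetric_in_R_Moor:
  fixes q :: "tree \<Rightarrow>\<^sub>0 'k::field"
  assumes q: "q \<in> freeop 3" and anti: "left3_antisymmetric q"
  shows "q \<in> R_Moor"
proof -
  let ?q = "Poly_Mapping.lookup q"
  define E :: "tree \<Rightarrow>\<^sub>0 'k" where "E =
    fscale (?q (left3 1 2 3)) (rel_nap 1 2 3) + fscale (?q (left3 2 1 3)) (rel_nap 2 1 3)
    + fscale (?q (left3 3 1 2)) (rel_nap 3 1 2)
    + fscale (?q (right3 1 2 3)) (rel_right 1 2 3) + fscale (?q (right3 1 3 2)) (rel_right 1 3 2)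
    + fscale (?q (right3 2 1 3)) (rel_right 2 1 3) + fscale (?q (right3 2 3 1)) (rel_right 2 3 1)
    + fscale (?q (right3 3 1 2)) (rel_right 3 1 2) + fscale (?q (right3 3 2 1)) (rel_right 3 2 1)"
  have perms: "is_perm3 1 2 3" "is_perm3 2 1 3" "is_perm3 3 1 2" "is_perm3 1 3 2" "is_perm3 2 3 1" "is_perm3 3 2 1"
    by (simp_all add: is_perm3_iff)
  have "E \<in> R_Moor" unfolding E_def
    by (intro R_Moor_add R_Moor_fscale_rel_nap R_Moor_fscale_rel_right perms)
  have swap: "?q (left3 1 3 2) = - ?q (left3 1 2 3)" "?q (left3 2 3 1) = - ?q (left3 2 1 3)"
    "?q (left3 3 2 1) = - ?q (left3 3 1 2)"
    using anti perms unfolding left3_antisymmetric_def by (metis add_eq_0_iff)+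
  have "q = E"
  proof (rule poly_mapping_eqI)
    fix t
    show "?q t = Poly_Mapping.lookup E t"
    proof (cases "t \<in> multilin 3")
      case True
      then show ?thesis unfolding multilin_3_explicit
        by (elim insertE emptyE; simp add: E_def rel_nap_def rel_right_def lookup_add lookup_minus
            lookup_single when_def swap[unfolded One_nat_def])
    next
      case False
      then have "?q t = 0" using q unfolding freeop_def by (auto simp: in_keys_iff)
      moreover have "t \<noteq> left3 1 2 3" "t \<noteq> left3 1 3 2" "t \<noteq> left3 2 1 3" "t \<noteq> left3 2 3 1"
        "t \<noteq> left3 3 1 2" "t \<noteq> left3 3 2 1" "t \<noteq> right3 1 2 3" "t \<noteq> right3 1 3 2"
        "t \<noteq> right3 2 1 3" "t \<noteq> right3 2 3 1" "t \<noteq> right3 3 1 2" "t \<noteq> right3 3 2 1"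
        using False unfolding multilin_3_explicit by auto
      ultimately show ?thesis
        by (simp add: E_def rel_nap_def rel_right_def lookup_add lookup_minus lookup_single when_def)
    qed
  qed
  with \<open>E \<in> R_Moor\<close> show ?thesis by simp
qed

lemma koszul_dual_R_NAP: "koszul_dual_rel (R_NAP :: (tree \<Rightarrow>\<^sub>0 'k::field) set) = R_Moor"
  unfolding koszul_dual_rel_def orthogonal_R_NAP_iff
  using left3_antisymmetric_in_R_Moor R_Moor_left3_antisymmetric R_Moor_subset_freeop by blast

section \<open>The dimension of \<open>Moor(n)\<close>\<close>

lemma lin_map_add: "lin_map h (p + q) = lin_map h p + lin_map h q"
  unfolding lin_map_def by (rule setsum_keys_plus_distrib) (simp_all add: single_add)

lemma lin_map_scale: "lin_map h (fscale c p) = fscale c (lin_map h p)"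
  unfolding lin_map_def by (subst sum_keys_fscale) (simp_all add: fs.scale_sum_right)

lemma lin_map_single [simp]: "lin_map h (Poly_Mapping.single t c) = Poly_Mapping.single (h t) c"
  unfolding lin_map_def by (simp add: sum_keys_single)

lemma lin_map_zero [simp]: "lin_map h 0 = 0"
  by (simp add: lin_map_def)

lemma lin_map_diff: "lin_map h (p - q) = lin_map h p - lin_map h q"
  by (metis add_diff_cancel diff_add_cancel lin_map_add)

lemma keys_lin_map: "Poly_Mapping.keys (lin_map h p) \<subseteq> h ` Poly_Mapping.keys p"
  unfolding lin_map_def by (rule order.trans[OF keys_sum]) auto

fun is_leaf :: "tree \<Rightarrow> bool" where
  "is_leaf (Leaf i) = True"
| "is_leaf (Node l r) = False"

fun is_left_comb :: "tree \<Rightarrow> bool" where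
  "is_left_comb (Leaf i) = True"
| "is_left_comb (Node l r) = (is_left_comb l \<and> is_leaf r)"

fun head_leaf :: "tree \<Rightarrow> nat" where
  "head_leaf (Leaf i) = i"
| "head_leaf (Node l r) = head_leaf l"

lemma head_leaf_in_leaves: "head_leaf t \<in> set (leaves t)"
  by (induction t) auto

definition comb :: "tree \<Rightarrow> nat list \<Rightarrow> tree" where
  "comb t zs = foldl (\<lambda>t z. Node t (Leaf z)) t zs"

lemma comb_Nil [simp]: "comb t [] = t"
  and comb_Cons [simp]: "comb t (z # zs) = comb (Node t (Leaf z)) zs"
  and comb_append [simp]: "comb t (xs @ ys) = comb (comb t xs) ys"
  by (simp_all add: comb_def)

lemma leaves_comb [simp]: "leaves (comb t zs) = leaves t @ zs"
  and is_left_comb_comb [simp]: "is_left_comb (comb t zs) = is_left_comb t"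
  and head_leaf_comb [simp]: "head_leaf (comb t zs) = head_leaf t"
  by (induction zs arbitrary: t) auto

lemma left_comb_eq_comb: "is_left_comb t \<Longrightarrow> t = comb (Leaf (head_leaf t)) (tl (leaves t))"
proof (induction t)
  case (Node l r)
  then obtain z where r: "r = Leaf z" by (cases r) auto
  have "tl (leaves l @ [z]) = tl (leaves l) @ [z]"
    using leaves_not_Nil[of l] by (cases "leaves l") auto
  with Node r show ?case by (metis comb_Cons comb_Nil comb_append head_leaf.simps(2) leaves.simps is_left_comb.simps(2))
qed simp

lemma plug_comb: "0 \<notin> set zs \<Longrightarrow> plug (comb C zs) X = comb (plug C X) zs"
  by (induction zs arbitrary: C) auto

lemma plug_no_hole: "0 \<notin> set (leaves C) \<Longrightarrow> plug C X = C"
  by (induction C) auto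

lemma plug_cong_left_comb:
  assumes "is_leaf X = is_leaf Y" "is_left_comb X = is_left_comb Y" "head_leaf X = head_leaf Y"
  shows "is_left_comb (plug C X) = is_left_comb (plug C Y) \<and> head_leaf (plug C X) = head_leaf (plug C Y)
    \<and> is_leaf (plug C X) = is_leaf (plug C Y)"
  using assms by (induction C) auto

lemma plug_not_leaf: "0 \<in> set (leaves C) \<Longrightarrow> \<not> is_leaf X \<Longrightarrow> \<not> is_leaf (plug C X)"
  by (induction C) auto

lemma plug_not_left_comb:
  "0 \<in> set (leaves C) \<Longrightarrow> \<not> is_left_comb X \<Longrightarrow> \<not> is_leaf X \<Longrightarrow> \<not> is_left_comb (plug C X)"
  by (induction C) (auto simp: plug_not_leaf)

lemma mset_leaves_plug:
  "mset (leaves X) = mset (leaves Y) \<Longrightarrow> mset (leaves (plug C X)) = mset (leaves (plug C Y))"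
  by (induction C) auto

lemma multilin_mset_leaves_eq:
  "mset (leaves x) = mset (leaves y) \<Longrightarrow> x \<in> multilin n \<Longrightarrow> y \<in> multilin n"
  unfolding multilin_def using mset_eq_setD mset_eq_imp_distinct_iff by blast

lemma mset_leaves_subst3:
  "s \<in> multilin 3 \<Longrightarrow> mset (leaves (subst3 s a b c)) = mset (leaves (Nd (Nd a b) c))"
  unfolding multilin_3_explicit by (elim insertE emptyE) (simp_all add: ac_simps)

definition comb_coeff :: "nat \<Rightarrow> (tree \<Rightarrow>\<^sub>0 'k::field) \<Rightarrow> 'k" where
  "comb_coeff i p = (\<Sum>t\<in>Poly_Mapping.keys p. if is_left_comb t \<and> head_leaf t = i then Poly_Mapping.lookup p t else 0)"

lemma comb_coeff_add: "comb_coeff i (p + q) = comb_coeff i p + comb_coeff i q"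
  unfolding comb_coeff_def by (rule setsum_keys_plus_distrib) simp_all

lemma comb_coeff_scale: "comb_coeff i (fscale c p) = c * comb_coeff i p"
  unfolding comb_coeff_def
  by (subst sum_keys_fscale) (simp_all add: sum_distrib_left if_distrib cong: if_cong)

lemma comb_coeff_single:
  "comb_coeff i (Poly_Mapping.single t c) = (if is_left_comb t \<and> head_leaf t = i then c else 0)"
  unfolding comb_coeff_def by (simp add: sum_keys_single)

lemma comb_coeff_zero [simp]: "comb_coeff i 0 = 0"
  by (simp add: comb_coeff_def)

lemma comb_coeff_diff: "comb_coeff i (p - q) = comb_coeff i p - comb_coeff i q"
  by (metis add_diff_cancel diff_add_cancel comb_coeff_add)

lemma comb_coeff_span_eq_0:
  "p \<in> fs.span S \<Longrightarrow> (\<And>s. s \<in> S \<Longrightarrow> comb_coeff i s = 0) \<Longrightarrow> comb_coeff i p = 0"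
  by (induction p rule: fs.span_induct_alt) (simp_all add: comb_coeff_add comb_coeff_scale)

text \<open>Both monomials of a NAP relation become left combs with the same head, or both do not; a
  monomial containing \<open>a \<prec> (b \<prec> c)\<close> is never a left comb.\<close>
lemma comb_coeff_op_ideal_generator:
  assumes r: "r \<in> R_Moor" and C: "count (mset (leaves C)) 0 = 1"
  shows "comb_coeff i (lin_map (plug C) (lin_map (\<lambda>t. subst3 t a b c) r)) = (0::'k::field)"
  using r unfolding R_Moor_def
proof (induction r rule: fs.span_induct_alt)
  case (step d x y)
  have hole: "0 \<in> set (leaves C)" using C by (metis count_eq_zero_iff set_mset_mset zero_neq_one)
  let ?s = "\<lambda>n. subst3 (Leaf n) a b c"
  from step(1) obtain i' j' k' where "x = rel_nap i' j' k' \<or> x = rel_right i' j' k'" by blast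
  then have "comb_coeff i (lin_map (plug C) (lin_map (\<lambda>t. subst3 t a b c) x)) = (0::'k)"
  proof
    assume x: "x = rel_nap i' j' k'"
    have "is_left_comb (Nd (Nd (?s i') (?s j')) (?s k')) = is_left_comb (Nd (Nd (?s i') (?s k')) (?s j'))"
      by (simp only: is_left_comb.simps conj_ac)
    then have "is_left_comb (plug C (Nd (Nd (?s i') (?s j')) (?s k')))
        = is_left_comb (plug C (Nd (Nd (?s i') (?s k')) (?s j')))
      \<and> head_leaf (plug C (Nd (Nd (?s i') (?s j')) (?s k')))
        = head_leaf (plug C (Nd (Nd (?s i') (?s k')) (?s j')))"
      using plug_cong_left_comb[of _ _ C] by simp
    then show ?thesis unfolding x rel_nap_def
      by (simp del: subst3.simps add: subst3.simps(2) lin_map_diff comb_coeff_diff comb_coeff_single)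
  next
    assume x: "x = rel_right i' j' k'"
    have "\<not> is_left_comb (plug C (Nd (?s i') (Nd (?s j') (?s k'))))"
      by (rule plug_not_left_comb[OF hole]) auto
    then show ?thesis unfolding x rel_right_def
      by (simp del: subst3.simps add: subst3.simps(2) comb_coeff_single)
  qed
  then show ?case using step(2) by (simp add: lin_map_add lin_map_scale comb_coeff_add comb_coeff_scale)
qed simp

lemma comb_coeff_op_ideal: "p \<in> op_ideal R_Moor n \<Longrightarrow> comb_coeff i p = (0::'k::field)"
  unfolding op_ideal_def by (rule comb_coeff_span_eq_0) (auto intro: comb_coeff_op_ideal_generator)

lemma finite_trees_bounded: "finite S \<Longrightarrow> finite {t. set (leaves t) \<subseteq> S \<and> length (leaves t) \<le> m}"
proof (induction m)
  case 0
  then show ?case using length_leaves_pos by (simp add: not_less_eq_eq[symmetric] leaves_not_Nil)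
next
  case (Suc m)
  let ?X = "{t. set (leaves t) \<subseteq> S \<and> length (leaves t) \<le> m}"
  have "{t. set (leaves t) \<subseteq> S \<and> length (leaves t) \<le> Suc m} \<subseteq> Leaf ` S \<union> case_prod Node ` (?X \<times> ?X)"
  proof
    fix t assume t: "t \<in> {t. set (leaves t) \<subseteq> S \<and> length (leaves t) \<le> Suc m}"
    show "t \<in> Leaf ` S \<union> case_prod Node ` (?X \<times> ?X)"
    proof (cases t)
      case (Node l r)
      have "length (leaves l) + length (leaves r) \<le> Suc m" using t Node by simp
      then have "length (leaves l) \<le> m" "length (leaves r) \<le> m"
        using length_leaves_pos[of l] length_leaves_pos[of r] by linarith+
      then show ?thesis using t Node by auto
    qed (use t in auto)
  qed
  moreover have "finite (Leaf ` S \<union> case_prod Node ` (?X \<times> ?X))" using Suc by auto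
  ultimately show ?case by (rule finite_subset)
qed

lemma finite_multilin: "finite (multilin n)"
proof -
  have "multilin n \<subseteq> {t. set (leaves t) \<subseteq> {1..n} \<and> length (leaves t) \<le> n}"
    unfolding multilin_def using distinct_card by fastforce
  then show ?thesis using finite_trees_bounded[of "{1..n}" n] by (rule finite_subset) simp
qed

lemma op_ideal_subset_freeop: "op_ideal R_Moor n \<subseteq> (freeop n :: (tree \<Rightarrow>\<^sub>0 'k::field) set)"
  unfolding op_ideal_def
proof (rule fs.span_minimal[OF _ subspace_freeop], rule subsetI)
  fix g :: "tree \<Rightarrow>\<^sub>0 'k"
  assume "g \<in> {lin_map (plug C) (lin_map (\<lambda>t. subst3 t a b c) r) | C r a b c.
        r \<in> R_Moor \<and> count (mset (leaves C)) 0 = 1 \<and> plug C (Node (Node a b) c) \<in> multilin n}"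
  then obtain C r a b c where g: "g = lin_map (plug C) (lin_map (\<lambda>t. subst3 t a b c) r)"
    and r: "r \<in> R_Moor" and m: "plug C (Node (Node a b) c) \<in> multilin n" by blast
  have kr: "Poly_Mapping.keys r \<subseteq> multilin 3" using r R_Moor_subset_freeop unfolding freeop_def by blast
  have "Poly_Mapping.keys g \<subseteq> plug C ` (\<lambda>t. subst3 t a b c) ` Poly_Mapping.keys r"
    unfolding g using keys_lin_map by (meson image_mono order.trans)
  also have "\<dots> \<subseteq> multilin n"
  proof clarify
    fix s assume "s \<in> Poly_Mapping.keys r"
    then have "mset (leaves (subst3 s a b c)) = mset (leaves (Nd (Nd a b) c))"
      using kr mset_leaves_subst3 by blast
    then show "plug C (subst3 s a b c) \<in> multilin n"
      using m mset_leaves_plug multilin_mset_leaves_eq by metis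
  qed
  finally show "g \<in> freeop n" unfolding freeop_def by simp
qed

lemma op_ideal_generator_in:
  assumes "r \<in> R_Moor" "count (mset (leaves C)) 0 = 1" "plug C (Node (Node a b) c) \<in> multilin n"
  shows "lin_map (plug C) (lin_map (\<lambda>t. subst3 t a b c) r) \<in> op_ideal R_Moor n"
  unfolding op_ideal_def by (rule fs.span_base) (use assms in blast)

lemma rel_nap_123_in_R_Moor: "rel_nap 1 2 3 \<in> R_Moor"
  and rel_right_123_in_R_Moor: "rel_right 1 2 3 \<in> R_Moor"
  unfolding R_Moor_def by (intro fs.span_base; force simp: is_perm3_def)+

lemma not_left_comb_decomp:
  "0 \<notin> set (leaves t) \<Longrightarrow> \<not> is_left_comb t \<Longrightarrow> \<exists>C a b c pre post. t = plug C (Nd a (Nd b c)) \<and>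
     leaves C = pre @ [0] @ post \<and> 0 \<notin> set pre \<and> 0 \<notin> set post \<and>
     (\<forall>Y. leaves (plug C Y) = pre @ leaves Y @ post)"
proof (induction t)
  case (Node l r)
  show ?case
  proof (cases "is_left_comb l")
    case False
    then obtain C a b c pre post where C: "l = plug C (Nd a (Nd b c))"
      "leaves C = pre @ [0] @ post" "0 \<notin> set pre" "0 \<notin> set post"
      "\<forall>Y. leaves (plug C Y) = pre @ leaves Y @ post" using Node by auto
    have r: "plug r Y = r" for Y using Node.prems by (intro plug_no_hole) auto
    show ?thesis
      by (rule exI[of _ "Node C r"], rule exI[of _ a], rule exI[of _ b], rule exI[of _ c],
          rule exI[of _ pre], rule exI[of _ "post @ leaves r"]) (use C r Node.prems in auto)
  next
    case True
    then obtain b c where r: "r = Nd b c" using Node.prems by (cases r) auto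
    show ?thesis
      by (rule exI[of _ "Leaf 0"], rule exI[of _ l], rule exI[of _ b], rule exI[of _ c],
          rule exI[of _ "[]"], rule exI[of _ "[]"]) (use r in auto)
  qed
qed simp

lemma single_not_left_comb_in_op_ideal:
  assumes t: "t \<in> multilin n" and not_comb: "\<not> is_left_comb t"
  shows "Poly_Mapping.single t (1::'k::field) \<in> op_ideal R_Moor n"
proof -
  have "0 \<notin> set (leaves t)" using t unfolding multilin_def by auto
  then obtain C a b c pre post where C: "t = plug C (Nd a (Nd b c))"
      "leaves C = pre @ [0] @ post" "0 \<notin> set pre" "0 \<notin> set post"
      "\<forall>Y. leaves (plug C Y) = pre @ leaves Y @ post"
    using not_left_comb_decomp not_comb by blast
  have hole: "count (mset (leaves C)) 0 = 1" using C(2-4) by (simp add: count_eq_zero_iff)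
  have "leaves (plug C (Nd (Nd a b) c)) = leaves t" using C(1,5) by simp
  then have "plug C (Nd (Nd a b) c) \<in> multilin n" using t unfolding multilin_def by simp
  moreover have "lin_map (plug C) (lin_map (\<lambda>t. subst3 t a b c) (rel_right 1 2 3)) = Poly_Mapping.single t (1::'k)"
    using C(1) by (simp add: rel_right_def)
  ultimately show ?thesis using op_ideal_generator_in[OF rel_right_123_in_R_Moor hole] by metis
qed

abbreviation comb_vec :: "nat \<Rightarrow> nat list \<Rightarrow> (tree \<Rightarrow>\<^sub>0 'k::field)" where
  "comb_vec h xs \<equiv> Poly_Mapping.single (comb (Leaf h) xs) 1"

lemma comb_swap_in_op_ideal:
  assumes d: "distinct (h # pre @ x # y # rest)" and s: "set (h # pre @ x # y # rest) = {1..n}"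
  shows "comb_vec h (pre @ x # y # rest) - comb_vec h (pre @ y # x # rest) \<in> (op_ideal R_Moor n :: (tree \<Rightarrow>\<^sub>0 'k::field) set)"
proof -
  define A where "A = comb (Leaf h) pre"
  define C where "C = comb (Leaf 0) rest"
  have "0 \<notin> set rest"
  proof
    assume "0 \<in> set rest"
    then have "(0::nat) \<in> {1..n}" unfolding s[symmetric] by simp
    then show False by simp
  qed
  then have plug_C: "plug C Z = comb Z rest" for Z unfolding C_def by (simp add: plug_comb)
  have hole: "count (mset (leaves C)) 0 = 1"
    using \<open>0 \<notin> set rest\<close> by (simp add: C_def count_eq_zero_iff)
  have xy: "comb (Leaf h) (pre @ x # y # rest) = plug C (Nd (Nd A (L x)) (L y))"
    and yx: "comb (Leaf h) (pre @ y # x # rest) = plug C (Nd (Nd A (L y)) (L x))"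
    by (simp_all add: plug_C A_def)
  have "plug C (Nd (Nd A (L x)) (L y)) \<in> multilin n"
    using d s unfolding xy[symmetric] multilin_def by simp
  moreover have "lin_map (plug C) (lin_map (\<lambda>t. subst3 t A (L x) (L y)) (rel_nap 1 2 3)) =
     comb_vec h (pre @ x # y # rest) - (comb_vec h (pre @ y # x # rest) :: tree \<Rightarrow>\<^sub>0 'k)"
    unfolding xy yx by (simp add: rel_nap_def lin_map_diff)
  ultimately show ?thesis using op_ideal_generator_in[OF rel_nap_123_in_R_Moor hole] by metis
qed

lemma op_ideal_diff_trans:
  "p - q \<in> op_ideal R n \<Longrightarrow> q - r \<in> op_ideal R n \<Longrightarrow> p - r \<in> op_ideal R n"
  using fs.span_add[of "p - q" _ "q - r"] unfolding op_ideal_def by simp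

lemma comb_insort_in_op_ideal:
  "sorted ys \<Longrightarrow> distinct (h # pre @ x # ys) \<Longrightarrow> set (h # pre @ x # ys) = {1..n} \<Longrightarrow>
   comb_vec h (pre @ x # ys) - comb_vec h (pre @ insort x ys) \<in> (op_ideal R_Moor n :: (tree \<Rightarrow>\<^sub>0 'k::field) set)"
proof (induction ys arbitrary: pre)
  case (Cons y ys)
  show ?case
  proof (cases "x \<le> y")
    case False
    have "comb_vec h (pre @ x # y # ys) - comb_vec h (pre @ y # x # ys) \<in> (op_ideal R_Moor n :: (tree \<Rightarrow>\<^sub>0 'k) set)"
      using Cons.prems by (intro comb_swap_in_op_ideal) auto
    moreover have "comb_vec h ((pre @ [y]) @ x # ys) - comb_vec h ((pre @ [y]) @ insort x ys)
        \<in> (op_ideal R_Moor n :: (tree \<Rightarrow>\<^sub>0 'k) set)"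
      using Cons.prems by (intro Cons.IH) auto
    ultimately show ?thesis using False by (simp add: op_ideal_diff_trans)
  qed (simp add: op_ideal_def fs.span_zero)
qed (simp add: op_ideal_def fs.span_zero)

lemma comb_sort_in_op_ideal:
  "distinct (h # pre @ xs) \<Longrightarrow> set (h # pre @ xs) = {1..n} \<Longrightarrow>
   comb_vec h (pre @ xs) - comb_vec h (pre @ sort xs) \<in> (op_ideal R_Moor n :: (tree \<Rightarrow>\<^sub>0 'k::field) set)"
proof (induction xs arbitrary: pre)
  case (Cons x xs)
  have "comb_vec h ((pre @ [x]) @ xs) - comb_vec h ((pre @ [x]) @ sort xs) \<in> (op_ideal R_Moor n :: (tree \<Rightarrow>\<^sub>0 'k) set)"
    using Cons.prems by (intro Cons.IH) auto
  moreover have "comb_vec h (pre @ x # sort xs) - comb_vec h (pre @ insort x (sort xs))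
      \<in> (op_ideal R_Moor n :: (tree \<Rightarrow>\<^sub>0 'k) set)"
    using Cons.prems by (intro comb_insort_in_op_ideal) auto
  ultimately show ?case by (simp add: op_ideal_diff_trans)
qed (simp add: op_ideal_def fs.span_zero)

definition canonical_comb :: "nat \<Rightarrow> nat \<Rightarrow> tree" where
  "canonical_comb n i = comb (Leaf i) (sorted_list_of_set ({1..n} - {i}))"

lemma canonical_comb_multilin: "i \<in> {1..n} \<Longrightarrow> canonical_comb n i \<in> multilin n"
  by (auto simp: multilin_def canonical_comb_def)

lemma comb_coeff_canonical_comb:
  "comb_coeff j (Poly_Mapping.single (canonical_comb n i) 1) = (if i = j then 1 else 0)"
  by (simp add: comb_coeff_single canonical_comb_def)

lemma left_comb_canonical_in_op_ideal:
  assumes t: "t \<in> multilin n" and "is_left_comb t"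
  shows "Poly_Mapping.single t 1 - Poly_Mapping.single (canonical_comb n (head_leaf t)) 1
    \<in> (op_ideal R_Moor n :: (tree \<Rightarrow>\<^sub>0 'k::field) set)"
proof -
  define h where "h = head_leaf t"
  define xs where "xs = tl (leaves t)"
  have t_comb: "t = comb (Leaf h) xs" unfolding h_def xs_def by (rule left_comb_eq_comb) fact
  then have "leaves t = h # xs" by simp
  then have "distinct (h # xs)" and "set (h # xs) = {1..n}" using t unfolding multilin_def by auto
  then have "set xs = {1..n} - {h}" by auto
  moreover have "sorted_list_of_set (set xs) = sort xs"
    using \<open>distinct (h # xs)\<close> by (simp add: sorted_list_of_set_sort_remdups distinct_remdups_id)
  ultimately have "sorted_list_of_set ({1..n} - {h}) = sort xs" by simp
  then have "canonical_comb n h = comb (Leaf h) (sort xs)" by (simp add: canonical_comb_def)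
  moreover have "comb_vec h xs - comb_vec h (sort xs) \<in> (op_ideal R_Moor n :: (tree \<Rightarrow>\<^sub>0 'k) set)"
    using comb_sort_in_op_ideal[of h "[]" xs n] \<open>distinct (h # xs)\<close> \<open>set (h # xs) = {1..n}\<close> by simp
  ultimately show ?thesis using t_comb by simp
qed

lemma freeop_subset_span_singles:
  assumes "(p :: tree \<Rightarrow>\<^sub>0 'k::field) \<in> freeop n"
    and "\<And>t. t \<in> multilin n \<Longrightarrow> Poly_Mapping.single t 1 \<in> fs.span S"
  shows "p \<in> fs.span S"
proof -
  have "p = (\<Sum>x\<in>Poly_Mapping.keys p. fscale (Poly_Mapping.lookup p x) (Poly_Mapping.single x 1))"
    using poly_mapping_sum_single[of p] by simp
  also have "\<dots> \<in> fs.span S"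
    using assms unfolding freeop_def by (intro fs.span_sum fs.span_scale) auto
  finally show ?thesis .
qed

lemma freeop_subset_span_op_ideal_canonical:
  "freeop n \<subseteq> fs.span (op_ideal R_Moor n \<union> (\<lambda>i. Poly_Mapping.single (canonical_comb n i) (1::'k::field)) ` {1..n})"
  (is "_ \<subseteq> fs.span ?S")
proof
  fix p :: "tree \<Rightarrow>\<^sub>0 'k" assume "p \<in> freeop n"
  then show "p \<in> fs.span ?S"
  proof (rule freeop_subset_span_singles)
    fix t assume t: "t \<in> multilin n"
    show "Poly_Mapping.single t 1 \<in> fs.span ?S"
    proof (cases "is_left_comb t")
      case False
      then show ?thesis using single_not_left_comb_in_op_ideal[OF t] by (intro fs.span_base) blast
    next
      case True
      have "head_leaf t \<in> {1..n}" using head_leaf_in_leaves[of t] t unfolding multilin_def by blast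
      let ?c = "Poly_Mapping.single (canonical_comb n (head_leaf t)) 1"
      have "?c \<in> fs.span ?S" using \<open>head_leaf t \<in> {1..n}\<close> by (intro fs.span_base) blast
      moreover have "Poly_Mapping.single t 1 - ?c \<in> fs.span ?S"
        using left_comb_canonical_in_op_ideal[OF t True] by (intro fs.span_base) blast
      ultimately show ?thesis using fs.span_add[of "Poly_Mapping.single t 1 - ?c" ?S ?c] by simp
    qed
  qed
qed

lemma (in vector_space) dim_eq_dim_add_card_dual:
  fixes \<phi> :: "'i \<Rightarrow> 'b \<Rightarrow> 'a" and c :: "'i \<Rightarrow> 'b"
  assumes "finite S" "V \<subseteq> span S" "finite K"
    and "W \<subseteq> V" "c ` K \<subseteq> V" "V \<subseteq> span (W \<union> c ` K)"
    and add: "\<And>j x y. \<phi> j (x + y) = \<phi> j x + \<phi> j y"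
    and scale: "\<And>j a x. \<phi> j (scale a x) = a * \<phi> j x"
    and vanish: "\<And>j w. w \<in> W \<Longrightarrow> \<phi> j w = 0"
    and dual: "\<And>i j. i \<in> K \<Longrightarrow> j \<in> K \<Longrightarrow> \<phi> j (c i) = (if i = j then 1 else 0)"
  shows "dim V = dim W + card K"
proof -
  obtain B where B: "B \<subseteq> W" "independent B" "W \<subseteq> span B" "card B = dim W"
    using basis_exists by blast
  have "finite B"
    using independent_span_bound[OF \<open>finite S\<close> B(2)] B(1) assms(2,4) by blast
  have zero: "\<phi> j 0 = 0" for j
    using scale[of j 0 0] by simp
  have span_vanish: "\<phi> j x = 0" if "x \<in> span (B \<union> c ` F)" "F \<subseteq> K" "j \<in> K" "j \<notin> F" for x j F
    using that(1)
  proof (induction x rule: span_induct_alt)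
    case (step a g x)
    have "\<phi> j g = 0" using step(1) B(1) that(2-4) by (auto simp: vanish dual)
    then show ?case using step(2) by (simp add: add scale)
  qed (simp add: zero)
  have independent: "independent (B \<union> c ` F)" if "F \<subseteq> K" for F
    using finite_subset[OF that \<open>finite K\<close>] that
  proof (induction F rule: finite_subset_induct')
    case (insert i F)
    have "\<phi> i (c i) = 1" using insert(2) dual by simp
    then have "c i \<notin> span (B \<union> c ` F)" using span_vanish[OF _ insert(3,2,4)] by force
    then show ?case using insert(5) independent_insertI by fastforce
  qed (use B(2) in simp)
  have "B \<inter> c ` K = {}"
    using B(1) vanish dual by fastforce
  moreover have "inj_on c K"
    using dual by (intro inj_onI) (metis one_neq_zero)
  ultimately have "card (B \<union> c ` K) = dim W + card K"
    using B(4) \<open>finite B\<close> \<open>finite K\<close> by (simp add: card_Un_disjoint card_image)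
  moreover have "V \<subseteq> span (B \<union> c ` K)"
    using assms(6) B(3) span_mono[of B "B \<union> c ` K"] span_superset[of "B \<union> c ` K"]
      span_minimal[of "W \<union> c ` K" "span (B \<union> c ` K)"] by blast
  ultimately show ?thesis
    using dim_unique[of "B \<union> c ` K" V] B(1) assms(4,5) independent[OF order_refl] by blast
qed

lemma op_dim_R_Moor: "op_dim (R_Moor :: (tree \<Rightarrow>\<^sub>0 'k::field) set) n = n"
proof -
  let ?c = "\<lambda>i. Poly_Mapping.single (canonical_comb n i) (1::'k)"
  let ?S = "(\<lambda>t. Poly_Mapping.single t (1::'k)) ` multilin n"
  have "fs.dim (freeop n :: (tree \<Rightarrow>\<^sub>0 'k) set) = fs.dim (op_ideal R_Moor n :: (tree \<Rightarrow>\<^sub>0 'k) set) + card {1..n}"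
  proof (rule fs.dim_eq_dim_add_card_dual[where S = ?S and \<phi> = comb_coeff and c = ?c])
    show "freeop n \<subseteq> fs.span ?S"
    proof
      fix p :: "tree \<Rightarrow>\<^sub>0 'k" assume "p \<in> freeop n"
      then show "p \<in> fs.span ?S" by (rule freeop_subset_span_singles) (intro fs.span_base imageI)
    qed
    show "?c ` {1..n} \<subseteq> freeop n"
      using canonical_comb_multilin by (auto simp: freeop_def)
    show "freeop n \<subseteq> fs.span (op_ideal R_Moor n \<union> ?c ` {1..n})"
      by (rule freeop_subset_span_op_ideal_canonical)
  qed (simp_all add: finite_multilin op_ideal_subset_freeop comb_coeff_add comb_coeff_scale comb_coeff_op_ideal comb_coeff_canonical_comb)
  then show ?thesis by (simp add: op_dim_def)
qed

lemma Abs_fps_of_nat_div_fact: "Abs_fps (\<lambda>n. of_nat n / fact n) = fps_X * fps_exp (1 :: 'a::field_char_0)"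
proof (rule fps_ext)
  fix n
  show "fps_nth (Abs_fps (\<lambda>n. of_nat n / fact n)) n = fps_nth (fps_X * fps_exp (1 :: 'a)) n"
  proof (cases n)
    case (Suc m)
    have "(of_nat (Suc m) :: 'a) / fact (Suc m) = 1 / fact m"
      by (simp add: field_simps del: of_nat_Suc)
    then show ?thesis using Suc by (simp del: of_nat_Suc)
  qed simp
qed

theorem theorem2p1:
  fixes scaleV :: "'k::field_char_0 \<Rightarrow> 'v::ab_group_add \<Rightarrow> 'v"
  assumes "vector_space scaleV"
  shows
    "koszul_dual_rel (R_NAP :: (tree \<Rightarrow>\<^sub>0 'k) set) = R_Moor
     \<and> is_free_moor_tensor_sym scaleV
     \<and> (\<forall>(scaleA :: 'k \<Rightarrow> 'a::ab_group_add \<Rightarrow> 'a) pr f.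
          moor_algebra scaleA pr \<and> Vector_Spaces.linear scaleV scaleA f \<longrightarrow>
          (\<exists>!G. moor_morphism_from_ts scaleV scaleA pr G \<and> (\<forall>v. G (tsi v) = f v)))
     \<and> (\<forall>n\<ge>1. op_dim (R_Moor :: (tree \<Rightarrow>\<^sub>0 'k) set) n = n)
     \<and> Abs_fps (\<lambda>n. of_nat (op_dim (R_Moor :: (tree \<Rightarrow>\<^sub>0 'k) set) n) / fact n)
         = (fps_X * fps_exp 1 :: 'k fps)"
proof (intro conjI allI impI)
  show "koszul_dual_rel (R_NAP :: (tree \<Rightarrow>\<^sub>0 'k) set) = R_Moor"
    by (rule koszul_dual_R_NAP)
  show "is_free_moor_tensor_sym scaleV"
    by (rule is_free_moor_tensor_sym)
  fix scaleA :: "'k \<Rightarrow> 'a \<Rightarrow> 'a" and pr f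
  assume "moor_algebra scaleA pr \<and> Vector_Spaces.linear scaleV scaleA f"
  then show "\<exists>!G. moor_morphism_from_ts scaleV scaleA pr G \<and> (\<forall>v. G (tsi v) = f v)"
    using free_moor_universal by blast
next
  fix n :: nat
  show "op_dim (R_Moor :: (tree \<Rightarrow>\<^sub>0 'k) set) n = n"
    by (rule op_dim_R_Moor)
next
  show "Abs_fps (\<lambda>n. of_nat (op_dim (R_Moor :: (tree \<Rightarrow>\<^sub>0 'k) set) n) / fact n)
      = (fps_X * fps_exp 1 :: 'k fps)"
    by (simp add: op_dim_R_Moor Abs_fps_of_nat_div_fact)
qed

end
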